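(* Let $d\ge1$ and let $0<\alpha_1\le\alpha_2\le\dots\le\alpha_d<1$. Then the simplices $S_{\alpha_1},\dots,S_{\alpha_d}\subset\mathbb R^d$ have a common point.
   Context: Let $e_1,\dots,e_d$ be the standard basis of $\mathbb R^d$. For $0\le\alpha\le1$, $S_\alpha$ is the $(d-1)$-dimensional simplex (convex hull) with vertices $v_k=e_1+\dots+e_{k-1}+\alpha e_k$ for $k=1,\dots,d$. *)

theory Defs
  imports "HOL-Analysis.Analysis"
begin

text \<open>Coordinates of R^d are indexed by a finite linearly (well-)ordered type 'n,
  playing the role of {1,...,d} with d = CARD('n).  The standard basis vector e_k is
  axis k 1.\<close>

definition simplex_vertex :: "real \<Rightarrow> 'n::{finite,wellorder} \<Rightarrow> real ^ ('n::{finite,wellorder})" where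
  "simplex_vertex a k = (\<Sum>j\<in>{j. j < k}. axis j 1) + a *\<^sub>R axis k 1"

definition S_simplex :: "real \<Rightarrow> (real ^ ('n::{finite,wellorder})) set" where
  "S_simplex a = convex hull (range (simplex_vertex a :: 'n::{finite,wellorder} \<Rightarrow> real ^ ('n::{finite,wellorder})))"

end

theory Submission
  imports Defs
begin

(* Write rank j = #{l. l < j} \<in> {0..d-1} and let staircase m be the 0/1 vector
   whose first m coordinates (in the order of the index type) are 1.  The vertex v_k of
   S_a is the convex combination  a * staircase (rank k + 1) + (1 - a) * staircase (rank k).
   Choose a random set A \<subseteq> {1..d} containing each b independently with probability
   \<alpha> b, and let x be the expected value of staircase |A|.  Conditioning on whether i \<in> A
   writes x as an average, over the random set B = A - {i} of size < d, of the points
   \<alpha> i * staircase (|B| + 1) + (1 - \<alpha> i) * staircase |B|, each of which is a vertex of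
   S_{\<alpha> i}. *)

definition rank :: "'n::{finite,wellorder} \<Rightarrow> nat" where
  "rank j = card {l. l < j}"

lemma rank_strict_mono: "strict_mono (rank :: 'n::{finite,wellorder} \<Rightarrow> nat)"
  unfolding strict_mono_def rank_def by (auto intro: psubset_card_mono)

lemma rank_less_iff: "rank (j::'n::{finite,wellorder}) < rank k \<longleftrightarrow> j < k"
  using rank_strict_mono by (rule strict_mono_less)

lemma rank_eq_iff: "rank (j::'n::{finite,wellorder}) = rank k \<longleftrightarrow> j = k"
  using rank_strict_mono by (rule strict_mono_eq)

lemma range_rank: "range (rank :: 'n::{finite,wellorder} \<Rightarrow> nat) = {..<CARD('n)}"
proof (rule card_subset_eq)
  show "range (rank :: 'n \<Rightarrow> nat) \<subseteq> {..<CARD('n)}"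
    unfolding rank_def by (auto intro: psubset_card_mono)
  show "card (range (rank :: 'n \<Rightarrow> nat)) = card {..<CARD('n)}"
    using card_image[OF strict_mono_imp_inj_on[OF rank_strict_mono]] by simp
qed simp

definition staircase :: "nat \<Rightarrow> real ^ ('n::{finite,wellorder})" where
  "staircase m = (\<chi> j. if rank j < m then 1 else 0)"

lemma simplex_vertex_staircase:
  "simplex_vertex a k =
     a *\<^sub>R staircase (Suc (rank k)) + (1 - a) *\<^sub>R (staircase (rank k) :: real ^ 'n::{finite,wellorder})"
proof -
  have "(\<Sum>j\<in>{j. j < k}. axis j (1::real) $ l) = (if l < k then 1 else 0)" for l :: 'n
    by (simp add: axis_def)
  moreover have "rank l < Suc (rank k) \<longleftrightarrow> l < k \<or> l = k" for l :: 'n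
    by (metis less_Suc_eq rank_eq_iff rank_less_iff)
  ultimately show ?thesis
    unfolding vec_eq_iff simplex_vertex_def staircase_def
    by (auto simp: axis_def rank_less_iff)
qed

lemma staircase_step_in_S_simplex:
  fixes a :: real
  assumes "m < CARD('n)"
  shows "a *\<^sub>R staircase (Suc m) + (1 - a) *\<^sub>R staircase m \<in> (S_simplex a :: (real ^ 'n::{finite,wellorder}) set)"
proof -
  obtain k :: 'n where "rank k = m"
    using assms range_rank by (metis imageE lessThan_iff)
  then have "a *\<^sub>R staircase (Suc m) + (1 - a) *\<^sub>R staircase m = simplex_vertex a k"
    by (simp add: simplex_vertex_staircase)
  then show ?thesis
    unfolding S_simplex_def by (simp add: hull_inc)
qed

text \<open>Probability that the random subset of I, containing each b independently with
  probability p b, equals B.\<close>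

definition subset_weight :: "('a \<Rightarrow> real) \<Rightarrow> 'a set \<Rightarrow> 'a set \<Rightarrow> real" where
  "subset_weight p I B = prod p B * prod (\<lambda>b. 1 - p b) (I - B)"

lemma subset_weight_nonneg:
  assumes "\<And>b. b \<in> I \<Longrightarrow> 0 \<le> p b \<and> p b \<le> 1" and "B \<subseteq> I"
  shows "0 \<le> subset_weight p I B"
  unfolding subset_weight_def using assms
  by (intro mult_nonneg_nonneg prod_nonneg) auto

lemma sum_subset_weight:
  assumes "finite I"
  shows "(\<Sum>B\<in>Pow I. subset_weight p I B) = 1"
proof -
  have "(\<Prod>b\<in>I. p b + (1 - p b)) = (\<Sum>B\<in>Pow I. subset_weight p I B)"
    unfolding subset_weight_def by (rule prod_add) (rule assms)
  then show ?thesis by simp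
qed

lemma sum_subset_weight_insert:
  fixes f :: "'a set \<Rightarrow> 'b::real_vector"
  assumes "finite J" and "i \<notin> J"
  shows "(\<Sum>A\<in>Pow (insert i J). subset_weight p (insert i J) A *\<^sub>R f A) =
         (\<Sum>B\<in>Pow J. subset_weight p J B *\<^sub>R (p i *\<^sub>R f (insert i B) + (1 - p i) *\<^sub>R f B))"
proof -
  let ?w = "subset_weight p (insert i J)"
  have inj: "inj_on (insert i) (Pow J)"
    using assms(2) by (intro inj_onI) (metis PowD insert_ident subsetD)
  have without_i: "?w B = (1 - p i) * subset_weight p J B" if "B \<in> Pow J" for B
  proof -
    have "insert i J - B = insert i (J - B)" using that assms(2) by auto
    then show ?thesis unfolding subset_weight_def using assms by (simp add: finite_subset)
  qed
  have with_i: "?w (insert i B) = p i * subset_weight p J B" if "B \<in> Pow J" for B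
  proof -
    have "insert i J - insert i B = J - B" and "i \<notin> B" using that assms(2) by auto
    then show ?thesis unfolding subset_weight_def using that assms by (simp add: finite_subset)
  qed
  have "(\<Sum>A\<in>Pow (insert i J). ?w A *\<^sub>R f A) =
        (\<Sum>B\<in>Pow J. ?w B *\<^sub>R f B) + (\<Sum>A\<in>insert i ` Pow J. ?w A *\<^sub>R f A)"
    unfolding Pow_insert using assms by (intro sum.union_disjoint) auto
  also have "(\<Sum>A\<in>insert i ` Pow J. ?w A *\<^sub>R f A) = (\<Sum>B\<in>Pow J. ?w (insert i B) *\<^sub>R f (insert i B))"
    by (simp add: sum.reindex[OF inj])
  finally show ?thesis
    using without_i with_i by (simp add: sum.distrib[symmetric] scaleR_add_right algebra_simps)
qed

text \<open>The common point is the expected staircase of the random subset with inclusion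
  probabilities \<open>\<alpha>\<close>; it does not depend on i.\<close>

theorem lemma2p2:
  fixes \<alpha> :: "'n::{finite,wellorder} \<Rightarrow> real"
  assumes "\<And>i. 0 < \<alpha> i" and "\<And>i. \<alpha> i < 1" and "mono \<alpha>"
  shows "\<exists>x :: real ^ ('n::{finite,wellorder}). \<forall>i. x \<in> S_simplex (\<alpha> i)"
proof (intro exI allI)
  fix i :: 'n
  define J where "J = UNIV - {i}"
  have J: "finite J" "i \<notin> J" "insert i J = UNIV" unfolding J_def by auto
  let ?S = "S_simplex (\<alpha> i) :: (real ^ 'n::{finite,wellorder}) set"
  let ?x = "\<Sum>A\<in>Pow UNIV. subset_weight \<alpha> UNIV A *\<^sub>R staircase (card A)"
  have "?x = (\<Sum>B\<in>Pow J. subset_weight \<alpha> J B *\<^sub>R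
               (\<alpha> i *\<^sub>R staircase (card (insert i B)) + (1 - \<alpha> i) *\<^sub>R staircase (card B)))"
    using sum_subset_weight_insert[OF J(1,2), of \<alpha> "\<lambda>A. staircase (card A)"] J(3) by simp
  also have "\<dots> = (\<Sum>B\<in>Pow J. subset_weight \<alpha> J B *\<^sub>R
               (\<alpha> i *\<^sub>R staircase (Suc (card B)) + (1 - \<alpha> i) *\<^sub>R staircase (card B)))"
    using J(2) by (intro sum.cong refl) (auto simp: card_insert_if subset_iff)
  also have "\<dots> \<in> ?S"
  proof (rule convex_sum)
    show "convex ?S"
      unfolding S_simplex_def by (rule convex_convex_hull)
    show "(\<Sum>B\<in>Pow J. subset_weight \<alpha> J B) = 1"
      using J(1) by (rule sum_subset_weight)
    show "0 \<le> subset_weight \<alpha> J B" if "B \<in> Pow J" for B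
      using that assms(1,2) by (intro subset_weight_nonneg) (auto intro: less_imp_le)
    show "\<alpha> i *\<^sub>R staircase (Suc (card B)) + (1 - \<alpha> i) *\<^sub>R staircase (card B) \<in> ?S"
      if "B \<in> Pow J" for B
    proof -
      have "card B \<le> card J" using that J(1) by (auto intro: card_mono)
      also have "card J < CARD('n)" unfolding J_def by (simp add: card_Diff_singleton)
      finally show ?thesis by (rule staircase_step_in_S_simplex)
    qed
  qed (simp add: J(1))
  finally show "?x \<in> ?S" .
qed

end
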